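(* Let $G$ be a connected graph that is not a path, not a cycle, and not the claw graph $K_{1,3}$. Then $L^n(G)$ is not representable for every integer $n \geqslant 4$.
   Context: All graphs are finite and simple. For a word $W$ over an alphabet, two distinct letters $x,y$ alternate in $W$ if both occur in $W$ and, after erasing all other letters from $W$, one obtains a word of the form $xyxy\ldots$ or $yxyx\ldots$ (an alternating word of any length). A graph $G=(V,E)$ is representable if there exists a word $W$ over the alphabet $V$ in which every vertex occurs, such that for all distinct $x,y\in V$, the letters $x$ and $y$ alternate in $W$ if and only if $(x,y)\in E$. The line graph $L(G)$ of a graph $G$ has the edges of $G$ as vertices, two of them being adjacent in $L(G)$ iff they share an endpoint in $G$. $L^n(G)$ denotes the graph obtained from $G$ by applying the line graph operation $n$ times. *)

theory Defs
  imports Main "HOL-Library.FSet"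
begin

type_synonym 'v graph = "'v set \<times> 'v set set"

definition simple_graph :: "'v graph \<Rightarrow> bool" where
  "simple_graph G \<longleftrightarrow> finite (fst G) \<and>
     (\<forall>e\<in>snd G. \<exists>x y. x \<in> fst G \<and> y \<in> fst G \<and> x \<noteq> y \<and> e = {x, y})"

inductive reach :: "'v graph \<Rightarrow> 'v \<Rightarrow> 'v \<Rightarrow> bool" for G where
  refl: "x \<in> fst G \<Longrightarrow> reach G x x"
| step: "reach G x y \<Longrightarrow> {y, z} \<in> snd G \<Longrightarrow> reach G x z"

definition connected_graph :: "'v graph \<Rightarrow> bool" where
  "connected_graph G \<longleftrightarrow> fst G \<noteq> {} \<and> (\<forall>x\<in>fst G. \<forall>y\<in>fst G. reach G x y)"

definition is_path_graph :: "'v graph \<Rightarrow> bool" where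
  "is_path_graph G \<longleftrightarrow> (\<exists>n f. n \<ge> 1 \<and> bij_betw f {0..<n} (fst G) \<and>
      snd G = {{f i, f (Suc i)} | i. Suc i < n})"

definition is_cycle_graph :: "'v graph \<Rightarrow> bool" where
  "is_cycle_graph G \<longleftrightarrow> (\<exists>n f. n \<ge> 3 \<and> bij_betw f {0..<n} (fst G) \<and>
      snd G = {{f i, f ((Suc i) mod n)} | i. i < n})"

definition is_claw :: "'v graph \<Rightarrow> bool" where
  "is_claw G \<longleftrightarrow> (\<exists>c a b d. distinct [c, a, b, d] \<and> fst G = {c, a, b, d} \<and>
      snd G = {{c, a}, {c, b}, {c, d}})"

definition alternate :: "'v list \<Rightarrow> 'v \<Rightarrow> 'v \<Rightarrow> bool" where
  "alternate W x y \<longleftrightarrow> x \<in> set W \<and> y \<in> set W \<and>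
     (let w = filter (\<lambda>z. z = x \<or> z = y) W in
        \<forall>i. Suc i < length w \<longrightarrow> w ! i \<noteq> w ! Suc i)"

definition representable :: "'v graph \<Rightarrow> bool" where
  "representable G \<longleftrightarrow> (\<exists>W. set W = fst G \<and>
     (\<forall>x\<in>fst G. \<forall>y\<in>fst G. x \<noteq> y \<longrightarrow> (alternate W x y \<longleftrightarrow> {x, y} \<in> snd G)))"

text \<open>To iterate the line graph operation within one type, vertices live in a
universe: original vertices are Leaf v, and an edge e (a finite 2-set) of a
graph becomes the vertex Node e of its line graph.\<close>
datatype 'a gv = Leaf 'a | Node "'a gv fset"

definition line_graph :: "'a gv graph \<Rightarrow> 'a gv graph" where
  "line_graph G = ((\<lambda>e. Node (Abs_fset e)) ` snd G,
     {{Node (Abs_fset e), Node (Abs_fset f)} | e f.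
        e \<in> snd G \<and> f \<in> snd G \<and> e \<noteq> f \<and> e \<inter> f \<noteq> {}})"

definition embed_graph :: "'a graph \<Rightarrow> 'a gv graph" where
  "embed_graph G = (Leaf ` fst G, (\<lambda>e. Leaf ` e) ` snd G)"

definition iter_line_graph :: "nat \<Rightarrow> 'a graph \<Rightarrow> 'a gv graph" where
  "iter_line_graph n G = (line_graph ^^ n) (embed_graph G)"

end

(*
  A word representing a graph orders its vertices by first occurrence, and two adjacent
  vertices alternate with the earlier one leading. Counting occurrences in prefixes shows that
  this order is shortcut-free: whenever x < y < z < w and xy, yz, zw, xw are edges, so are xz
  and yw. The line graph of the wheel W4 admits no such order: the four spokes form a K4, the
  order on it is forced up to symmetry, and then no position is left for the rim 4-cycle.

  A connected graph that is not a path, a cycle or the claw contains a star K(1,4), a paw or a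
  fork. Three line-graph steps turn each of them into a graph containing W4
  (star -> K4 -> W4, paw -> diamond -> W4, fork -> paw -> diamond -> W4), and the line graph of
  a graph containing W4 again contains W4. Hence L^(n-1)(G) contains W4 for n >= 4, and L^n(G)
  contains an induced copy of L(W4).
*)
theory Submission
  imports Defs
begin

section \<open>Alternation as a counting condition\<close>

text \<open>Counting form of the alternation of x and y with x first; it turns the chord argument
  below into linear arithmetic.\<close>

definition leads :: "'v list \<Rightarrow> 'v \<Rightarrow> 'v \<Rightarrow> bool" where
  "leads W x y \<longleftrightarrow>
     (\<forall>i. count_list (take i W) y \<le> count_list (take i W) x \<and>
          count_list (take i W) x \<le> count_list (take i W) y + 1)"

lemma all_take_Cons: "(\<forall>i. P (take i (z # W))) \<longleftrightarrow> P [] \<and> (\<forall>i. P (z # take i W))"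
  by (metis take_0 take_Suc_Cons old.nat.exhaust)

lemma leads_Nil [simp]: "leads [] x y"
  by (simp add: leads_def)

lemma leads_Cons [simp]:
  assumes "x \<noteq> y"
  shows "leads (z # W) x y \<longleftrightarrow> (if z = x then leads W y x else z \<noteq> y \<and> leads W x y)"
proof -
  have "leads (z # W) x y \<longleftrightarrow>
      (\<forall>i. count_list (z # take i W) y \<le> count_list (z # take i W) x \<and>
           count_list (z # take i W) x \<le> count_list (z # take i W) y + 1)"
    unfolding leads_def
      all_take_Cons[where P = "\<lambda>u. count_list u y \<le> count_list u x \<and> count_list u x \<le> count_list u y + 1"]
    by simp
  also have "\<dots> \<longleftrightarrow> (if z = x then leads W y x else z \<noteq> y \<and> leads W x y)"
    using assms unfolding leads_def by (cases "z = y") (auto intro: exI[of _ 0])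
  finally show ?thesis .
qed

definition first_occ :: "'v list \<Rightarrow> 'v \<Rightarrow> nat" where
  "first_occ W x = length (takeWhile (\<lambda>z. z \<noteq> x) W)"

lemma first_occ_Cons [simp]: "first_occ (z # W) x = (if z = x then 0 else Suc (first_occ W x))"
  by (simp add: first_occ_def)

lemma inj_on_first_occ: "inj_on (first_occ W) (set W)"
proof (rule inj_onI)
  show "x \<in> set W \<Longrightarrow> y \<in> set W \<Longrightarrow> first_occ W x = first_occ W y \<Longrightarrow> x = y" for x y
    by (induction W) (auto split: if_splits)
qed

lemma hd_filter_first_occ:
  assumes "x \<in> set W" "y \<in> set W" "x \<noteq> y"
  shows "hd (filter (\<lambda>z. z = x \<or> z = y) W) = x \<longleftrightarrow> first_occ W x < first_occ W y"
  using assms by (induction W) auto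

lemma leads_iff_filter:
  assumes "x \<noteq> y"
  shows "leads W x y \<longleftrightarrow>
    (let w = filter (\<lambda>z. z = x \<or> z = y) W in distinct_adj w \<and> (w = [] \<or> hd w = x))"
  using assms
proof (induction W arbitrary: x y)
  case Nil then show ?case by simp
next
  case (Cons z W)
  define w where "w = filter (\<lambda>z. z = x \<or> z = y) W"
  have sym: "filter (\<lambda>z. z = y \<or> z = x) W = w" unfolding w_def by (rule filter_cong) auto
  have "set w \<subseteq> {x, y}" unfolding w_def by auto
  then have hd_w: "w \<noteq> [] \<Longrightarrow> hd w = x \<or> hd w = y" by (cases w) auto
  consider "z = x" | "z = y" | "z \<noteq> x" "z \<noteq> y" by blast
  then show ?case
  proof cases
    case 1
    then show ?thesis using Cons.IH[of y x] Cons.prems hd_w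
      by (auto simp: Let_def sym w_def[symmetric] distinct_adj_Cons)
  next
    case 2
    then show ?thesis using Cons.prems by simp
  next
    case 3
    then show ?thesis using Cons.IH[of x y] Cons.prems by simp
  qed
qed

lemma alternate_iff_distinct_adj:
  "alternate W x y \<longleftrightarrow> x \<in> set W \<and> y \<in> set W \<and> distinct_adj (filter (\<lambda>z. z = x \<or> z = y) W)"
  by (simp add: alternate_def distinct_adj_conv_nth Let_def)

lemma alternate_imp_leads:
  assumes "alternate W x y" "x \<noteq> y" "first_occ W x < first_occ W y"
  shows "leads W x y"
  using assms hd_filter_first_occ[of x W y]
  by (simp add: leads_iff_filter alternate_iff_distinct_adj)

lemma leads_imp_alternate:
  assumes "leads W x y" "x \<noteq> y" "x \<in> set W" "y \<in> set W"
  shows "alternate W x y"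
  using assms by (simp add: leads_iff_filter alternate_iff_distinct_adj Let_def)

lemma leads_chords:
  assumes "leads W x y" "leads W y z" "leads W z w" "leads W x w"
  shows "leads W x z \<and> leads W y w"
proof -
  have "count_list (take i W) z \<le> count_list (take i W) x \<and>
      count_list (take i W) x \<le> count_list (take i W) z + 1 \<and>
      count_list (take i W) w \<le> count_list (take i W) y \<and>
      count_list (take i W) y \<le> count_list (take i W) w + 1" for i
    using assms[unfolded leads_def, THEN spec[of _ i]] by linarith
  then show ?thesis unfolding leads_def by blast
qed

section \<open>Shortcut-free orders\<close>

text \<open>The case of paths of length three of a semi-transitive orientation, with the orientation
  given by a ranking of the vertices.\<close>

definition shortcut_free :: "'v set set \<Rightarrow> ('v \<Rightarrow> nat) \<Rightarrow> bool" where
  "shortcut_free E f \<longleftrightarrow> (\<forall>x y z w. f x < f y \<longrightarrow> f y < f z \<longrightarrow> f z < f w \<longrightarrow>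
     {x, y} \<in> E \<longrightarrow> {y, z} \<in> E \<longrightarrow> {z, w} \<in> E \<longrightarrow> {x, w} \<in> E \<longrightarrow>
     {x, z} \<in> E \<and> {y, w} \<in> E)"

lemma representable_shortcut_free:
  assumes "representable G" "\<Union> (snd G) \<subseteq> fst G"
  shows "\<exists>f. inj_on f (fst G) \<and> shortcut_free (snd G) f"
proof -
  obtain W where W: "set W = fst G"
    and rep: "\<forall>x\<in>fst G. \<forall>y\<in>fst G. x \<noteq> y \<longrightarrow> (alternate W x y \<longleftrightarrow> {x, y} \<in> snd G)"
    using assms(1) unfolding representable_def by blast
  have edge_iff: "alternate W x y \<longleftrightarrow> {x, y} \<in> snd G"
    if "x \<in> fst G" "y \<in> fst G" "x \<noteq> y" for x y
    using rep that by blast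
  have V: "x \<in> fst G" "y \<in> fst G" if "{x, y} \<in> snd G" for x y
    using that assms(2) by auto
  have edge_leads: "leads W x y" if "{x, y} \<in> snd G" "first_occ W x < first_occ W y" for x y
  proof (rule alternate_imp_leads)
    show "x \<noteq> y" using that(2) by auto
    then show "alternate W x y" using edge_iff[OF V[OF that(1)]] that(1) by blast
  qed (fact that(2))
  have leads_edge: "{x, y} \<in> snd G" if "leads W x y" "first_occ W x < first_occ W y"
    "x \<in> fst G" "y \<in> fst G" for x y
  proof -
    have "x \<noteq> y" using that(2) by auto
    moreover have "x \<in> set W" "y \<in> set W" using that(3,4) W by simp_all
    ultimately have "alternate W x y" by (rule leads_imp_alternate[OF that(1)])
    then show ?thesis using edge_iff[OF that(3,4) \<open>x \<noteq> y\<close>] by blast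
  qed
  have "shortcut_free (snd G) (first_occ W)"
    unfolding shortcut_free_def
  proof (intro allI impI)
    fix x y z w
    assume ord: "first_occ W x < first_occ W y" "first_occ W y < first_occ W z"
      "first_occ W z < first_occ W w"
      and E: "{x, y} \<in> snd G" "{y, z} \<in> snd G" "{z, w} \<in> snd G" "{x, w} \<in> snd G"
    have "leads W x z" "leads W y w"
      using leads_chords[OF edge_leads[OF E(1) ord(1)] edge_leads[OF E(2) ord(2)]
          edge_leads[OF E(3) ord(3)] edge_leads[OF E(4)]] ord by simp_all
    moreover have "first_occ W x < first_occ W z" "first_occ W y < first_occ W w"
      using ord by simp_all
    ultimately show "{x, z} \<in> snd G \<and> {y, w} \<in> snd G"
      using leads_edge V(1)[OF E(1)] V(1)[OF E(2)] V(2)[OF E(2)] V(2)[OF E(3)] by blast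
  qed
  moreover have "inj_on (first_occ W) (fst G)"
    using inj_on_first_occ[of W] unfolding W .
  ultimately show ?thesis by blast
qed

lemma shortcut_freeD:
  assumes "shortcut_free E f" "f x < f y" "f y < f z" "f z < f w"
    "{x, y} \<in> E" "{y, z} \<in> E" "{z, w} \<in> E" "{x, w} \<in> E"
  shows "{x, z} \<in> E" "{y, w} \<in> E"
  using assms unfolding shortcut_free_def by blast+

lemma shortcut_free_between:
  assumes "shortcut_free E f"
    and "{u, x} \<in> E" "{x, v} \<in> E" "{u, y} \<in> E" "{y, v} \<in> E" "{x, y} \<notin> E"
    and "f y \<noteq> f u" "f y \<noteq> f v" "f u < f x" "f x < f v"
  shows "f u < f y \<and> f y < f v"
proof (rule ccontr)
  assume "\<not> (f u < f y \<and> f y < f v)"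
  then consider "f y < f u" | "f v < f y" using assms(7,8) by linarith
  then show False
  proof cases
    case 1
    then have "{y, x} \<in> E"
      using shortcut_freeD(1)[OF assms(1) 1 assms(9,10)] assms(2-5) by (simp add: insert_commute)
    then show False using assms(6) by (simp add: insert_commute)
  next
    case 2
    then have "{x, y} \<in> E"
      using shortcut_freeD(2)[OF assms(1,9,10) 2] assms(2-5) by (simp add: insert_commute)
    then show False using assms(6) by blast
  qed
qed

section \<open>The line graph of the wheel W4\<close>

text \<open>An induced copy of L(W4): a, b, c, d are the spokes of the wheel in cyclic order and
  p, q, r, t its rim edges, p joining the rim ends of a and b, q those of b and c, and so on.\<close>
definition line_wheel :: "'v set set \<Rightarrow> 'v \<Rightarrow> 'v \<Rightarrow> 'v \<Rightarrow> 'v \<Rightarrow> 'v \<Rightarrow> 'v \<Rightarrow> 'v \<Rightarrow> 'v \<Rightarrow> bool" where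
  "line_wheel E a b c d p q r t \<longleftrightarrow> distinct [a, b, c, d, p, q, r, t] \<and>
     {a, b} \<in> E \<and> {a, c} \<in> E \<and> {a, d} \<in> E \<and> {b, c} \<in> E \<and> {b, d} \<in> E \<and> {c, d} \<in> E \<and>
     {p, q} \<in> E \<and> {q, r} \<in> E \<and> {r, t} \<in> E \<and> {t, p} \<in> E \<and>
     {a, p} \<in> E \<and> {b, p} \<in> E \<and> {b, q} \<in> E \<and> {c, q} \<in> E \<and>
     {c, r} \<in> E \<and> {d, r} \<in> E \<and> {d, t} \<in> E \<and> {a, t} \<in> E \<and>
     {p, r} \<notin> E \<and> {q, t} \<notin> E \<and> {a, q} \<notin> E \<and> {a, r} \<notin> E \<and> {b, r} \<notin> E \<and>
     {b, t} \<notin> E \<and> {c, t} \<notin> E \<and> {c, p} \<notin> E \<and> {d, p} \<notin> E \<and> {d, q} \<notin> E"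

lemma line_wheel_rotate: "line_wheel E a b c d p q r t \<Longrightarrow> line_wheel E b c d a q r t p"
  unfolding line_wheel_def by (auto simp: insert_commute)

lemma line_wheel_reflect: "line_wheel E a b c d p q r t \<Longrightarrow> line_wheel E a d c b t r q p"
  unfolding line_wheel_def by (auto simp: insert_commute)

lemma line_wheel_monotone_spokes_not_shortcut_free:
  assumes lw: "line_wheel E a b c d p q r t" and inj: "inj_on f {a, b, c, d, p, q, r, t}"
    and spokes: "f a < f b" "f b < f c" "f c < f d"
  shows "\<not> shortcut_free E f"
proof
  assume sf: "shortcut_free E f"
  have ne: "distinct (map f [a, b, c, d, p, q, r, t])"
    using lw inj unfolding line_wheel_def by (simp add: distinct_map)
  note E = lw[unfolded line_wheel_def, THEN conjunct2]
  note chord = shortcut_freeD[OF sf]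
  have t: "f a < f t \<and> f t < f d"
    by (rule shortcut_free_between[OF sf, of a b d t])
      (use E ne spokes in \<open>auto simp: insert_commute\<close>)
  have "\<not> (f a < f p \<and> f p < f b)" "f p \<noteq> f a" "f p \<noteq> f b"
    using shortcut_free_between[OF sf, of a p b c] E ne spokes by (auto simp: insert_commute)
  then have p: "f p < f a \<or> f b < f p" by linarith
  have "\<not> (f b < f q \<and> f q < f c)" "f q \<noteq> f b" "f q \<noteq> f c"
    using shortcut_free_between[OF sf, of b q c a] E ne spokes by (auto simp: insert_commute)
  then have q: "f q < f b \<or> f c < f q" by linarith
  have "\<not> (f c < f r \<and> f r < f d)" "f r \<noteq> f c" "f r \<noteq> f d"
    using shortcut_free_between[OF sf, of c r d a] E ne spokes by (auto simp: insert_commute)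
  then have r: "f r < f c \<or> f d < f r" by linarith
  have pbt: "\<not> (f b < f p \<and> f p < f t)"
    using shortcut_free_between[OF sf, of b p t d] E ne spokes t by (auto simp: insert_commute)
  have rtc: "\<not> (f t < f r \<and> f r < f c)"
    using shortcut_free_between[OF sf, of t r c a] E ne spokes t by (auto simp: insert_commute)
  have "f p \<noteq> f t" "f r \<noteq> f t" "f q \<noteq> f r" "f p \<noteq> f q" using ne by auto
  note facts = E spokes t this
  \<comment> \<open>t lies between its spokes, p, q, r do not; the rim cycle p q r t cannot be placed.\<close>
  show False
  proof (cases "f q < f b")
    case True
    have "f r < f c" using r chord(2)[of q b c r] True facts by (auto simp: insert_commute)
    then have "f r < f t" using rtc facts by linarith
    have "f q < f r" using chord(1)[of r q b c] True \<open>f r < f c\<close> facts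
      by (auto simp: insert_commute linorder_neq_iff)
    have "f p < f t" using chord(1)[of q r t p] \<open>f q < f r\<close> \<open>f r < f t\<close> facts
      by (auto simp: insert_commute linorder_neq_iff)
    then have "f p < f a" using p pbt by linarith
    consider "f p < f q" | "f q < f p" using facts by linarith
    then show False
    proof cases
      case 1
      then show False using chord(1)[of p q r t] \<open>f q < f r\<close> \<open>f r < f t\<close> facts
        by (auto simp: insert_commute)
    next
      case 2
      then show False using chord(1)[of q p a b] \<open>f p < f a\<close> True facts
        by (auto simp: insert_commute)
    qed
  next
    case False
    then have "f c < f q" using q by linarith
    have "f b < f p" using p chord(2)[of p a b q] \<open>f c < f q\<close> facts by (auto simp: insert_commute)
    then have "f t < f p" using pbt facts by linarith
    have "f p < f q" using chord(2)[of b c q p] \<open>f b < f p\<close> \<open>f c < f q\<close> facts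
      by (auto simp: insert_commute linorder_neq_iff)
    have "f t < f r" using chord(2)[of r t p q] \<open>f t < f p\<close> \<open>f p < f q\<close> facts
      by (auto simp: insert_commute linorder_neq_iff)
    then have "f d < f r" using r rtc by linarith
    consider "f q < f r" | "f r < f q" using facts by linarith
    then show False
    proof cases
      case 1
      then show False using chord(2)[of t p q r] \<open>f t < f p\<close> \<open>f p < f q\<close> facts
        by (auto simp: insert_commute)
    next
      case 2
      then show False using chord(2)[of c d r q] \<open>f d < f r\<close> facts
        by (auto simp: insert_commute)
    qed
  qed
qed

lemma line_wheel_least_spoke_not_shortcut_free:
  assumes lw: "line_wheel E a b c d p q r t" and inj: "inj_on f {a, b, c, d, p, q, r, t}"
    and least: "f a < f b" "f a < f c" "f a < f d"
  shows "\<not> shortcut_free E f"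
proof
  assume sf: "shortcut_free E f"
  have ne: "distinct (map f [a, b, c, d, p, q, r, t])"
    using lw inj unfolding line_wheel_def by (simp add: distinct_map)
  note facts = lw[unfolded line_wheel_def, THEN conjunct2] ne least
  \<comment> \<open>a is outside the ranges of b, c and of c, d; the rim vertices q and r carry this over
    to d and b, so the ranks of b, c, d are monotone.\<close>
  have "\<not> (f b < f q \<and> f q < f c)" "\<not> (f c < f q \<and> f q < f b)"
    using shortcut_free_between[OF sf, of b q c a] shortcut_free_between[OF sf, of c q b a] facts
    by (auto simp: insert_commute)
  then have d: "\<not> (f b < f d \<and> f d < f c)" "\<not> (f c < f d \<and> f d < f b)"
    using shortcut_free_between[OF sf, of b d c q] shortcut_free_between[OF sf, of c d b q] facts
    by (auto simp: insert_commute)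
  have "\<not> (f c < f r \<and> f r < f d)" "\<not> (f d < f r \<and> f r < f c)"
    using shortcut_free_between[OF sf, of c r d a] shortcut_free_between[OF sf, of d r c a] facts
    by (auto simp: insert_commute)
  then have b: "\<not> (f c < f b \<and> f b < f d)" "\<not> (f d < f b \<and> f b < f c)"
    using shortcut_free_between[OF sf, of c b d r] shortcut_free_between[OF sf, of d b c r] facts
    by (auto simp: insert_commute)
  have "f b \<noteq> f c" "f b \<noteq> f d" "f c \<noteq> f d" using ne by auto
  then have "f b < f c \<and> f c < f d \<or> f d < f c \<and> f c < f b"
    using b d by linarith
  moreover have "inj_on f {a, d, c, b, t, r, q, p}"
    using inj by (simp add: insert_commute)
  ultimately show False
    using line_wheel_monotone_spokes_not_shortcut_free[OF lw inj]
      line_wheel_monotone_spokes_not_shortcut_free[OF line_wheel_reflect[OF lw]] sf least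
    by blast
qed

lemma line_wheel_not_shortcut_free:
  assumes lw: "line_wheel E a b c d p q r t" and inj: "inj_on f {a, b, c, d, p, q, r, t}"
  shows "\<not> shortcut_free E f"
proof -
  have lw1: "line_wheel E b c d a q r t p" by (rule line_wheel_rotate[OF lw])
  have lw2: "line_wheel E c d a b r t p q" by (rule line_wheel_rotate[OF lw1])
  have lw3: "line_wheel E d a b c t p q r" by (rule line_wheel_rotate[OF lw2])
  have "f a \<noteq> f b" "f a \<noteq> f c" "f a \<noteq> f d" "f b \<noteq> f c" "f b \<noteq> f d" "f c \<noteq> f d"
    using lw inj unfolding line_wheel_def by (auto simp: inj_on_eq_iff)
  then consider "f a < f b \<and> f a < f c \<and> f a < f d" | "f b < f a \<and> f b < f c \<and> f b < f d"
    | "f c < f a \<and> f c < f b \<and> f c < f d" | "f d < f a \<and> f d < f b \<and> f d < f c"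
    by linarith
  then show ?thesis
  proof cases
    case 1
    then show ?thesis using line_wheel_least_spoke_not_shortcut_free[OF lw inj] by blast
  next
    case 2
    then show ?thesis using line_wheel_least_spoke_not_shortcut_free[OF lw1] inj
      by (simp add: insert_commute)
  next
    case 3
    then show ?thesis using line_wheel_least_spoke_not_shortcut_free[OF lw2] inj
      by (simp add: insert_commute)
  next
    case 4
    then show ?thesis using line_wheel_least_spoke_not_shortcut_free[OF lw3] inj
      by (simp add: insert_commute)
  qed
qed

section \<open>Line graphs\<close>

abbreviation edge_vertex :: "'a gv set \<Rightarrow> 'a gv" where
  "edge_vertex e \<equiv> Node (Abs_fset e)"

lemma Abs_fset_doubleton_eq_iff [simp]:
  "Abs_fset {x, y} = Abs_fset {u, v} \<longleftrightarrow> {x, y} = {u, v}"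
  by (simp add: Abs_fset_inject)

lemma line_graph_vertexI: "e \<in> snd K \<Longrightarrow> edge_vertex e \<in> fst (line_graph K)"
  unfolding line_graph_def by auto

lemma line_graph_edgeI:
  "e \<in> snd K \<Longrightarrow> f \<in> snd K \<Longrightarrow> e \<noteq> f \<Longrightarrow> e \<inter> f \<noteq> {} \<Longrightarrow>
    {edge_vertex e, edge_vertex f} \<in> snd (line_graph K)"
  unfolding line_graph_def by auto

text \<open>Finiteness of the edges is needed because Abs_fset is injective only on finite sets.\<close>

lemma disjoint_not_line_graph_edge:
  assumes "\<forall>e\<in>snd K. finite e" "e \<in> snd K" "f \<in> snd K" "e \<inter> f = {}"
  shows "{edge_vertex e, edge_vertex f} \<notin> snd (line_graph K)"
proof
  assume "{edge_vertex e, edge_vertex f} \<in> snd (line_graph K)"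
  then obtain e' f' where "{edge_vertex e, edge_vertex f} = {edge_vertex e', edge_vertex f'}"
    "e' \<in> snd K" "f' \<in> snd K" "e' \<inter> f' \<noteq> {}"
    unfolding line_graph_def by auto
  with assms show False by (auto simp: doubleton_eq_iff Abs_fset_inject)
qed

lemma line_graph_edges_subset: "\<Union> (snd (line_graph K)) \<subseteq> fst (line_graph K)"
  unfolding line_graph_def by auto

lemma line_graph_finite_edges: "\<forall>e\<in>snd (line_graph K). finite e"
  unfolding line_graph_def by auto

text \<open>The following patterns are subgraphs, not necessarily induced.\<close>

definition has_star4 :: "'v graph \<Rightarrow> bool" where
  "has_star4 K \<longleftrightarrow> (\<exists>c a b d e. distinct [c, a, b, d, e] \<and>
     {c, a} \<in> snd K \<and> {c, b} \<in> snd K \<and> {c, d} \<in> snd K \<and> {c, e} \<in> snd K)"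

definition has_K4 :: "'v graph \<Rightarrow> bool" where
  "has_K4 K \<longleftrightarrow> (\<exists>a b c d. distinct [a, b, c, d] \<and>
     {a, b} \<in> snd K \<and> {a, c} \<in> snd K \<and> {a, d} \<in> snd K \<and>
     {b, c} \<in> snd K \<and> {b, d} \<in> snd K \<and> {c, d} \<in> snd K)"

lemma has_K4_line_graph_star4: "has_star4 K \<Longrightarrow> has_K4 (line_graph K)"
  unfolding has_star4_def has_K4_def
  apply (elim exE conjE)
  subgoal for c a b d e
    by (rule exI[of _ "edge_vertex {c, a}"], rule exI[of _ "edge_vertex {c, b}"],
        rule exI[of _ "edge_vertex {c, d}"], rule exI[of _ "edge_vertex {c, e}"])
      (intro conjI line_graph_edgeI; auto simp: doubleton_eq_iff)
  done

definition has_wheel4 :: "'v graph \<Rightarrow> bool" where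
  "has_wheel4 K \<longleftrightarrow> (\<exists>h r1 r2 r3 r4. distinct [h, r1, r2, r3, r4] \<and>
     {h, r1} \<in> snd K \<and> {h, r2} \<in> snd K \<and> {h, r3} \<in> snd K \<and> {h, r4} \<in> snd K \<and>
     {r1, r2} \<in> snd K \<and> {r2, r3} \<in> snd K \<and> {r3, r4} \<in> snd K \<and> {r4, r1} \<in> snd K)"

definition has_paw :: "'v graph \<Rightarrow> bool" where
  "has_paw K \<longleftrightarrow> (\<exists>x y z w. distinct [x, y, z, w] \<and>
     {x, y} \<in> snd K \<and> {x, z} \<in> snd K \<and> {y, z} \<in> snd K \<and> {x, w} \<in> snd K)"

definition has_diamond :: "'v graph \<Rightarrow> bool" where
  "has_diamond K \<longleftrightarrow> (\<exists>p q r s. distinct [p, q, r, s] \<and>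
     {p, q} \<in> snd K \<and> {p, r} \<in> snd K \<and> {q, r} \<in> snd K \<and> {p, s} \<in> snd K \<and> {q, s} \<in> snd K)"

definition has_fork :: "'v graph \<Rightarrow> bool" where
  "has_fork K \<longleftrightarrow> (\<exists>c a b d e. distinct [c, a, b, d, e] \<and>
     {c, a} \<in> snd K \<and> {c, b} \<in> snd K \<and> {c, d} \<in> snd K \<and> {a, e} \<in> snd K)"

lemma has_wheel4_line_graph_K4: "has_K4 K \<Longrightarrow> has_wheel4 (line_graph K)"
  unfolding has_K4_def has_wheel4_def
  apply (elim exE conjE)
  subgoal for a b c d
    by (rule exI[of _ "edge_vertex {a, b}"], rule exI[of _ "edge_vertex {a, c}"],
        rule exI[of _ "edge_vertex {a, d}"], rule exI[of _ "edge_vertex {b, d}"],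
        rule exI[of _ "edge_vertex {b, c}"])
      (intro conjI line_graph_edgeI; auto simp: doubleton_eq_iff)
  done

lemma has_wheel4_line_graph_wheel4: "has_wheel4 K \<Longrightarrow> has_wheel4 (line_graph K)"
  unfolding has_wheel4_def
  apply (elim exE conjE)
  subgoal for h r1 r2 r3 r4
    by (rule exI[of _ "edge_vertex {h, r1}"], rule exI[of _ "edge_vertex {h, r2}"],
        rule exI[of _ "edge_vertex {r1, r2}"], rule exI[of _ "edge_vertex {r4, r1}"],
        rule exI[of _ "edge_vertex {h, r4}"])
      (intro conjI line_graph_edgeI; auto simp: doubleton_eq_iff)
  done

lemma has_wheel4_line_graph_diamond: "has_diamond K \<Longrightarrow> has_wheel4 (line_graph K)"
  unfolding has_diamond_def has_wheel4_def
  apply (elim exE conjE)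
  subgoal for p q r s
    by (rule exI[of _ "edge_vertex {p, q}"], rule exI[of _ "edge_vertex {p, r}"],
        rule exI[of _ "edge_vertex {p, s}"], rule exI[of _ "edge_vertex {q, s}"],
        rule exI[of _ "edge_vertex {q, r}"])
      (intro conjI line_graph_edgeI; auto simp: doubleton_eq_iff)
  done

lemma has_diamond_line_graph_paw: "has_paw K \<Longrightarrow> has_diamond (line_graph K)"
  unfolding has_paw_def has_diamond_def
  apply (elim exE conjE)
  subgoal for x y z w
    by (rule exI[of _ "edge_vertex {x, y}"], rule exI[of _ "edge_vertex {x, z}"],
        rule exI[of _ "edge_vertex {y, z}"], rule exI[of _ "edge_vertex {x, w}"])
      (intro conjI line_graph_edgeI; auto simp: doubleton_eq_iff)
  done

lemma has_paw_line_graph_fork: "has_fork K \<Longrightarrow> has_paw (line_graph K)"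
  unfolding has_fork_def has_paw_def
  apply (elim exE conjE)
  subgoal for c a b d e
    by (rule exI[of _ "edge_vertex {c, a}"], rule exI[of _ "edge_vertex {c, b}"],
        rule exI[of _ "edge_vertex {c, d}"], rule exI[of _ "edge_vertex {a, e}"])
      (intro conjI line_graph_edgeI; auto simp: doubleton_eq_iff)
  done

lemma line_graph_line_wheel:
  assumes fin: "\<forall>e\<in>snd K. finite e" and "has_wheel4 K"
  shows "\<exists>a b c d p q r t. line_wheel (snd (line_graph K)) a b c d p q r t \<and>
    {a, b, c, d, p, q, r, t} \<subseteq> fst (line_graph K)"
proof -
  obtain h r1 r2 r3 r4 where di: "distinct [h, r1, r2, r3, r4]" and
    E: "{h, r1} \<in> snd K" "{h, r2} \<in> snd K" "{h, r3} \<in> snd K" "{h, r4} \<in> snd K"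
      "{r1, r2} \<in> snd K" "{r2, r3} \<in> snd K" "{r3, r4} \<in> snd K" "{r4, r1} \<in> snd K"
    using assms(2) unfolding has_wheel4_def by blast
  show ?thesis
    by (rule exI[of _ "edge_vertex {h, r1}"], rule exI[of _ "edge_vertex {h, r2}"],
        rule exI[of _ "edge_vertex {h, r3}"], rule exI[of _ "edge_vertex {h, r4}"],
        rule exI[of _ "edge_vertex {r1, r2}"], rule exI[of _ "edge_vertex {r2, r3}"],
        rule exI[of _ "edge_vertex {r3, r4}"], rule exI[of _ "edge_vertex {r4, r1}"])
      (unfold line_wheel_def,
       intro conjI line_graph_edgeI disjoint_not_line_graph_edge[OF fin] insert_subsetI
         line_graph_vertexI empty_subsetI;
       use E di in \<open>auto simp: doubleton_eq_iff\<close>)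
qed

lemma line_graph_wheel4_not_representable:
  assumes "\<forall>e\<in>snd K. finite e" "has_wheel4 K"
  shows "\<not> representable (line_graph K)"
proof
  assume "representable (line_graph K)"
  then obtain f where inj: "inj_on f (fst (line_graph K))"
    and sf: "shortcut_free (snd (line_graph K)) f"
    using representable_shortcut_free[OF _ line_graph_edges_subset] by blast
  obtain a b c d p q r t where lw: "line_wheel (snd (line_graph K)) a b c d p q r t"
    and V: "{a, b, c, d, p, q, r, t} \<subseteq> fst (line_graph K)"
    using line_graph_line_wheel[OF assms] by (elim exE conjE) (rule that)
  show False using line_wheel_not_shortcut_free[OF lw inj_on_subset[OF inj V]] sf by blast
qed

section \<open>Connected graphs of maximum degree two\<close>

lemma simple_graph_edgeD:
  assumes "simple_graph G" "{x, y} \<in> snd G"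
  shows "x \<in> fst G" "y \<in> fst G" "x \<noteq> y"
proof -
  obtain a b where "a \<in> fst G" "b \<in> fst G" "a \<noteq> b" "{x, y} = {a, b}"
    using assms unfolding simple_graph_def by blast
  then show "x \<in> fst G" "y \<in> fst G" "x \<noteq> y" by (auto simp: doubleton_eq_iff)
qed

lemma reach_exit_edge:
  "reach G x y \<Longrightarrow> x \<in> S \<Longrightarrow> y \<notin> S \<Longrightarrow> \<exists>u z. u \<in> S \<and> z \<notin> S \<and> {u, z} \<in> snd G"
  by (induction rule: reach.induct) blast+

lemma connected_graph_closed_set:
  assumes "connected_graph G" "S \<subseteq> fst G" "x \<in> S"
    and closed: "\<And>u z. u \<in> S \<Longrightarrow> {u, z} \<in> snd G \<Longrightarrow> z \<in> S"
  shows "fst G = S"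
proof
  show "fst G \<subseteq> S"
  proof
    fix y assume "y \<in> fst G"
    then have "reach G x y" using assms(1-3) unfolding connected_graph_def by blast
    then show "y \<in> S" using reach_exit_edge[of G x y S] assms(3) closed by blast
  qed
qed (fact assms(2))

definition max_degree_le_2 :: "'v graph \<Rightarrow> bool" where
  "max_degree_le_2 G \<longleftrightarrow> (\<forall>v a b d. {v, a} \<in> snd G \<longrightarrow> {v, b} \<in> snd G \<longrightarrow> {v, d} \<in> snd G \<longrightarrow>
     \<not> distinct [v, a, b, d])"

definition graph_path :: "'v graph \<Rightarrow> 'v list \<Rightarrow> bool" where
  "graph_path G P \<longleftrightarrow> distinct P \<and> set P \<subseteq> fst G \<and>
     (\<forall>i. Suc i < length P \<longrightarrow> {P ! i, P ! Suc i} \<in> snd G)"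

lemma graph_path_Cons:
  assumes "graph_path G P" "P \<noteq> []" "z \<notin> set P" "z \<in> fst G" "{z, P ! 0} \<in> snd G"
  shows "graph_path G (z # P)"
  unfolding graph_path_def
proof (intro conjI allI impI)
  show "distinct (z # P)" "set (z # P) \<subseteq> fst G" using assms unfolding graph_path_def by auto
  fix i assume "Suc i < length (z # P)"
  then show "{(z # P) ! i, (z # P) ! Suc i} \<in> snd G"
    using assms(1,5) unfolding graph_path_def by (cases i) auto
qed

lemma graph_path_snoc:
  assumes "graph_path G P" "P \<noteq> []" "z \<notin> set P" "z \<in> fst G" "{last P, z} \<in> snd G"
  shows "graph_path G (P @ [z])"
  unfolding graph_path_def
proof (intro conjI allI impI)
  show "distinct (P @ [z])" "set (P @ [z]) \<subseteq> fst G" using assms unfolding graph_path_def by auto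
  fix i assume i: "Suc i < length (P @ [z])"
  show "{(P @ [z]) ! i, (P @ [z]) ! Suc i} \<in> snd G"
  proof (cases "Suc i < length P")
    case True then show ?thesis using assms(1) unfolding graph_path_def by (simp add: nth_append)
  next
    case False
    then have "i = length P - 1" "Suc i = length P" using i by simp_all
    then show ?thesis using assms(2,5) by (simp add: nth_append last_conv_nth)
  qed
qed

lemma longest_graph_path_exists:
  assumes "finite (fst G)" "v \<in> fst G"
  shows "\<exists>P. graph_path G P \<and> (\<forall>Q. graph_path G Q \<longrightarrow> length Q \<le> length P)"
proof -
  have "graph_path G [v]" using assms(2) unfolding graph_path_def by simp
  moreover have "length Q < Suc (card (fst G))" if "graph_path G Q" for Q
    using that assms(1) unfolding graph_path_def by (metis card_mono distinct_card le_imp_less_Suc)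
  ultimately show ?thesis using ex_has_greatest_nat[of "graph_path G" "[v]" length] by blast
qed

lemma path_interior_neighbour:
  assumes sg: "simple_graph G" and P: "graph_path G P"
    and deg: "max_degree_le_2 G"
    and i: "0 < i" "Suc i < length P" and e: "{P ! i, z} \<in> snd G"
  shows "z = P ! (i - 1) \<or> z = P ! Suc i"
proof (rule ccontr)
  assume z: "\<not> (z = P ! (i - 1) \<or> z = P ! Suc i)"
  have "{P ! i, P ! (i - 1)} \<in> snd G" "{P ! i, P ! Suc i} \<in> snd G"
    using P i unfolding graph_path_def
    by (metis One_nat_def Suc_pred insert_commute less_imp_diff_less Suc_lessD)+
  moreover have "distinct [P ! i, P ! (i - 1), P ! Suc i, z]"
    using P i z simple_graph_edgeD(3)[OF sg e] unfolding graph_path_def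
    by (auto simp: nth_eq_iff_index_eq)
  ultimately show False using deg e unfolding max_degree_le_2_def by blast
qed

lemma longest_path_closed:
  assumes sg: "simple_graph G" and P: "graph_path G P"
    and deg: "max_degree_le_2 G"
    and longest: "\<And>Q. graph_path G Q \<Longrightarrow> length Q \<le> length P"
    and u: "u \<in> set P" and e: "{u, z} \<in> snd G"
  shows "z \<in> set P"
proof (rule ccontr)
  assume z: "z \<notin> set P"
  have "z \<in> fst G" using simple_graph_edgeD[OF sg e] by blast
  have ne: "P \<noteq> []" using u by auto
  obtain i where i: "i < length P" "u = P ! i" using u by (metis in_set_conv_nth)
  consider "i = 0" | "i = length P - 1" | "0 < i" "Suc i < length P" using i by linarith
  then show False
  proof cases
    case 1
    then have "graph_path G (z # P)"
      using graph_path_Cons[OF P ne z \<open>z \<in> fst G\<close>] e i by (simp add: insert_commute)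
    then show False using longest by fastforce
  next
    case 2
    then have "graph_path G (P @ [z])"
      using graph_path_snoc[OF P ne z \<open>z \<in> fst G\<close>] e i ne by (simp add: last_conv_nth)
    then show False using longest by fastforce
  next
    case 3
    then have "z = P ! (i - 1) \<or> z = P ! Suc i"
      using path_interior_neighbour[OF sg P deg] e i by blast
    then show False using z 3 by auto
  qed
qed

lemma path_chord:
  assumes sg: "simple_graph G" and P: "graph_path G P"
    and deg: "max_degree_le_2 G"
    and ij: "i < j" "j < length P" and e: "{P ! i, P ! j} \<in> snd G"
  shows "j = Suc i \<or> (i = 0 \<and> j = length P - 1)"
proof -
  have inj: "P ! x = P ! y \<longleftrightarrow> x = y" if "x < length P" "y < length P" for x y
    using P that unfolding graph_path_def by (simp add: nth_eq_iff_index_eq)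
  show ?thesis
  proof (cases "i = 0")
    case False
    then have "P ! j = P ! (i - 1) \<or> P ! j = P ! Suc i"
      using path_interior_neighbour[OF sg P deg _ _ e] ij by simp
    then show ?thesis using inj ij by auto
  next
    case True
    show ?thesis
    proof (rule ccontr)
      assume "\<not> (j = Suc i \<or> (i = 0 \<and> j = length P - 1))"
      then have j: "0 < j" "j - 1 \<noteq> 0" "Suc j < length P" using ij True by auto
      have "{P ! j, P ! 0} \<in> snd G" using e True by (simp add: insert_commute)
      then have "P ! 0 = P ! (j - 1) \<or> P ! 0 = P ! Suc j"
        using path_interior_neighbour[OF sg P deg] j by blast
      moreover have "P ! 0 \<noteq> P ! (j - 1)" "P ! 0 \<noteq> P ! Suc j"
        using inj[of 0 "j - 1"] inj[of 0 "Suc j"] j by linarith+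
      ultimately show False by blast
    qed
  qed
qed

lemma spanning_path_path_or_cycle:
  assumes dP: "distinct P" and ne: "P \<noteq> []" and V: "fst G = set P"
    and path: "\<And>i. Suc i < length P \<Longrightarrow> {P ! i, P ! Suc i} \<in> snd G"
    and edges: "\<And>e. e \<in> snd G \<Longrightarrow>
      (\<exists>i. Suc i < length P \<and> e = {P ! i, P ! Suc i}) \<or>
      3 \<le> length P \<and> e = {P ! 0, P ! (length P - 1)}"
  shows "is_path_graph G \<or> is_cycle_graph G"
proof -
  define k where "k = length P"
  have bij: "bij_betw (\<lambda>i. P ! i) {0..<k} (fst G)"
    using bij_betw_nth[OF dP] V unfolding k_def by (simp add: atLeast0LessThan)
  show ?thesis
  proof (cases "{P ! 0, P ! (k - 1)} \<in> snd G \<and> 3 \<le> k")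
    case True
    have "{{P ! i, P ! (Suc i mod k)} | i. i < k} =
        {{P ! i, P ! Suc i} | i. Suc i < k} \<union> {{P ! 0, P ! (k - 1)}}"
    proof (intro equalityI subsetI)
      fix e assume "e \<in> {{P ! i, P ! (Suc i mod k)} | i. i < k}"
      then obtain i where "i < k" "e = {P ! i, P ! (Suc i mod k)}" by blast
      moreover have "i = k - 1 \<and> Suc i mod k = 0" if "\<not> Suc i < k"
      proof -
        have "Suc i = k" using that \<open>i < k\<close> by linarith
        then show ?thesis by simp
      qed
      ultimately show "e \<in> {{P ! i, P ! Suc i} | i. Suc i < k} \<union> {{P ! 0, P ! (k - 1)}}"
        by (cases "Suc i < k") (auto simp: insert_commute)
    next
      fix e assume "e \<in> {{P ! i, P ! Suc i} | i. Suc i < k} \<union> {{P ! 0, P ! (k - 1)}}"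
      then consider i where "Suc i < k" "e = {P ! i, P ! Suc i}" | "e = {P ! 0, P ! (k - 1)}"
        by blast
      then show "e \<in> {{P ! i, P ! (Suc i mod k)} | i. i < k}"
      proof cases
        case (1 i)
        then have "i < k" "e = {P ! i, P ! (Suc i mod k)}" by simp_all
        then show ?thesis by blast
      next
        case 2
        then have "k - 1 < k" "e = {P ! (k - 1), P ! (Suc (k - 1) mod k)}"
          using True by (simp_all add: insert_commute)
        then show ?thesis by blast
      qed
    qed
    also have "\<dots> = snd G" using True path edges unfolding k_def by blast
    finally have "is_cycle_graph G" unfolding is_cycle_graph_def using bij True by blast
    then show ?thesis ..
  next
    case False
    have "snd G = {{P ! i, P ! Suc i} | i. Suc i < k}"
      using False path edges unfolding k_def by blast
    then have "is_path_graph G" unfolding is_path_graph_def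
      by (intro exI[of _ k] exI[of _ "\<lambda>i. P ! i"]) (use bij ne k_def in \<open>auto simp: Suc_le_eq\<close>)
    then show ?thesis ..
  qed
qed

lemma max_degree_le_2_path_or_cycle:
  assumes sg: "simple_graph G" and cg: "connected_graph G"
    and deg: "max_degree_le_2 G"
  shows "is_path_graph G \<or> is_cycle_graph G"
proof -
  obtain v where v: "v \<in> fst G" using cg unfolding connected_graph_def by blast
  obtain P where P: "graph_path G P" and longest: "\<And>Q. graph_path G Q \<Longrightarrow> length Q \<le> length P"
    using longest_graph_path_exists[OF _ v] sg unfolding simple_graph_def by blast
  have ne: "P \<noteq> []" using longest[of "[v]"] v unfolding graph_path_def by auto
  have dP: "distinct P" and path: "\<And>i. Suc i < length P \<Longrightarrow> {P ! i, P ! Suc i} \<in> snd G"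
    using P unfolding graph_path_def by auto
  have "set P \<subseteq> fst G" using P unfolding graph_path_def by simp
  moreover have "P ! 0 \<in> set P" using ne by simp
  ultimately have V: "fst G = set P"
    by (rule connected_graph_closed_set[OF cg]) (rule longest_path_closed[OF sg P deg longest])
  have edge: "(\<exists>i. Suc i < length P \<and> e = {P ! i, P ! Suc i}) \<or>
      3 \<le> length P \<and> e = {P ! 0, P ! (length P - 1)}" if e: "e \<in> snd G" for e
  proof -
    obtain x y where xy: "x \<in> set P" "y \<in> set P" "x \<noteq> y" "e = {x, y}"
      using sg e unfolding simple_graph_def V by blast
    obtain i where i: "i < length P" "x = P ! i" using xy(1) by (metis in_set_conv_nth)
    obtain j where j: "j < length P" "y = P ! j" using xy(2) by (metis in_set_conv_nth)
    have "i \<noteq> j" using i j xy(3) by blast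
    moreover have "e = {P ! j, P ! i}" using i j xy(4) by (simp add: insert_commute)
    ultimately have "\<exists>i j. i < j \<and> j < length P \<and> e = {P ! i, P ! j}"
      using i j xy(4) by (metis linorder_neqE_nat)
    then obtain i j where ij: "i < j" "j < length P" "e = {P ! i, P ! j}" by blast
    then have "j = Suc i \<or> (i = 0 \<and> j = length P - 1)"
      using path_chord[OF sg P deg] e by blast
    then show ?thesis using ij by (cases "j = Suc i") auto
  qed
  show ?thesis by (rule spanning_path_path_or_cycle[OF dP ne V path edge])
qed

section \<open>Subgraphs forced by the hypotheses\<close>

lemma exists_degree_three_vertex:
  assumes "simple_graph G" "connected_graph G" "\<not> is_path_graph G" "\<not> is_cycle_graph G"
  shows "\<exists>c a b d. distinct [c, a, b, d] \<and> {c, a} \<in> snd G \<and> {c, b} \<in> snd G \<and> {c, d} \<in> snd G"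
  using max_degree_le_2_path_or_cycle[OF assms(1,2)] assms(3,4) unfolding max_degree_le_2_def
  by blast

lemma no_star4_paw_fork_is_claw:
  assumes sg: "simple_graph G" and cg: "connected_graph G" and di: "distinct [c, a, b, d]"
    and ca: "{c, a} \<in> snd G" and cb: "{c, b} \<in> snd G" and cd: "{c, d} \<in> snd G"
    and no_pattern: "\<not> has_star4 G" "\<not> has_paw G" "\<not> has_fork G"
  shows "is_claw G"
proof -
  let ?S = "{c, a, b, d}"
  have centre: "e \<in> ?S" if "{c, e} \<in> snd G" for e
  proof (rule ccontr)
    assume "e \<notin> ?S"
    then have "has_star4 G" unfolding has_star4_def using di ca cb cd that
      by (intro exI[of _ c] exI[of _ a] exI[of _ b] exI[of _ d] exI[of _ e]) auto
    then show False using no_pattern by blast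
  qed
  have leaf: "e \<in> ?S" if x: "x \<in> {a, b, d}" and xe: "{x, e} \<in> snd G" for x e
  proof (rule ccontr)
    assume e: "e \<notin> ?S"
    from x consider "x = a" | "x = b" | "x = d" by blast
    then have "has_fork G"
    proof cases
      case 1 then show ?thesis unfolding has_fork_def using di ca cb cd xe e
        by (intro exI[of _ c] exI[of _ a] exI[of _ b] exI[of _ d] exI[of _ e]) auto
    next
      case 2 then show ?thesis unfolding has_fork_def using di ca cb cd xe e
        by (intro exI[of _ c] exI[of _ b] exI[of _ a] exI[of _ d] exI[of _ e]) auto
    next
      case 3 then show ?thesis unfolding has_fork_def using di ca cb cd xe e
        by (intro exI[of _ c] exI[of _ d] exI[of _ a] exI[of _ b] exI[of _ e]) auto
    qed
    then show False using no_pattern by blast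
  qed
  have "has_paw G" if "{a, b} \<in> snd G \<or> {a, d} \<in> snd G \<or> {b, d} \<in> snd G"
    using that
  proof (elim disjE)
    show "has_paw G" if "{a, b} \<in> snd G" unfolding has_paw_def using that di ca cb cd
      by (intro exI[of _ c] exI[of _ a] exI[of _ b] exI[of _ d]) auto
    show "has_paw G" if "{a, d} \<in> snd G" unfolding has_paw_def using that di ca cb cd
      by (intro exI[of _ c] exI[of _ a] exI[of _ d] exI[of _ b]) auto
    show "has_paw G" if "{b, d} \<in> snd G" unfolding has_paw_def using that di ca cb cd
      by (intro exI[of _ c] exI[of _ b] exI[of _ d] exI[of _ a]) auto
  qed
  then have rim: "{a, b} \<notin> snd G" "{a, d} \<notin> snd G" "{b, d} \<notin> snd G"
    using no_pattern by blast+
  have V: "fst G = ?S"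
  proof (rule connected_graph_closed_set[OF cg])
    show "?S \<subseteq> fst G" using simple_graph_edgeD[OF sg] ca cb cd by blast
    show "c \<in> ?S" by simp
    show "z \<in> ?S" if "u \<in> ?S" "{u, z} \<in> snd G" for u z
      using that centre leaf by (cases "u = c") auto
  qed
  have "snd G = {{c, a}, {c, b}, {c, d}}"
  proof (intro equalityI subsetI)
    fix e assume e: "e \<in> snd G"
    then obtain x y where "x \<in> fst G" "y \<in> fst G" "x \<noteq> y" "e = {x, y}"
      using sg unfolding simple_graph_def by blast
    then have "x \<in> ?S" "y \<in> ?S" "x \<noteq> y" "e = {x, y}" unfolding V by simp_all
    then show "e \<in> {{c, a}, {c, b}, {c, d}}" using rim e by (auto simp: insert_commute)
  qed (use ca cb cd in blast)
  then show ?thesis unfolding is_claw_def using di V by blast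
qed

lemma star4_or_paw_or_fork:
  assumes "simple_graph G" "connected_graph G" "\<not> is_path_graph G" "\<not> is_cycle_graph G"
    "\<not> is_claw G"
  shows "has_star4 G \<or> has_paw G \<or> has_fork G"
  using exists_degree_three_vertex[OF assms(1-4)] no_star4_paw_fork_is_claw[OF assms(1,2)] assms(5)
  by blast

section \<open>Iterated line graphs\<close>

lemma embed_graph_edgeI: "{x, y} \<in> snd G \<Longrightarrow> {Leaf x, Leaf y} \<in> snd (embed_graph G)"
  unfolding embed_graph_def by (simp add: image_iff) (metis image_empty image_insert)

lemma has_star4_embed_graph: "has_star4 G \<Longrightarrow> has_star4 (embed_graph G)"
  unfolding has_star4_def
  apply (elim exE conjE)
  subgoal for c a b d e
    by (rule exI[of _ "Leaf c"], rule exI[of _ "Leaf a"], rule exI[of _ "Leaf b"],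
        rule exI[of _ "Leaf d"], rule exI[of _ "Leaf e"]) (intro conjI embed_graph_edgeI; simp)
  done

lemma has_paw_embed_graph: "has_paw G \<Longrightarrow> has_paw (embed_graph G)"
  unfolding has_paw_def
  apply (elim exE conjE)
  subgoal for x y z w
    by (rule exI[of _ "Leaf x"], rule exI[of _ "Leaf y"], rule exI[of _ "Leaf z"],
        rule exI[of _ "Leaf w"]) (intro conjI embed_graph_edgeI; simp)
  done

lemma has_fork_embed_graph: "has_fork G \<Longrightarrow> has_fork (embed_graph G)"
  unfolding has_fork_def
  apply (elim exE conjE)
  subgoal for c a b d e
    by (rule exI[of _ "Leaf c"], rule exI[of _ "Leaf a"], rule exI[of _ "Leaf b"],
        rule exI[of _ "Leaf d"], rule exI[of _ "Leaf e"]) (intro conjI embed_graph_edgeI; simp)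
  done

lemma iter_line_graph_Suc: "iter_line_graph (Suc n) G = line_graph (iter_line_graph n G)"
  by (simp add: iter_line_graph_def)

lemma has_wheel4_iter_line_graph_3:
  assumes "has_star4 G \<or> has_paw G \<or> has_fork G"
  shows "has_wheel4 (iter_line_graph 3 G)"
proof -
  have L3: "iter_line_graph 3 G = line_graph (line_graph (line_graph (embed_graph G)))"
    by (simp add: iter_line_graph_def numeral_3_eq_3)
  from assms consider "has_star4 G" | "has_paw G" | "has_fork G" by blast
  then show ?thesis
  proof cases
    case 1
    then show ?thesis unfolding L3
      by (rule has_wheel4_line_graph_wheel4[OF has_wheel4_line_graph_K4[OF
            has_K4_line_graph_star4[OF has_star4_embed_graph]]])
  next
    case 2
    then show ?thesis unfolding L3
      by (rule has_wheel4_line_graph_wheel4[OF has_wheel4_line_graph_diamond[OF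
            has_diamond_line_graph_paw[OF has_paw_embed_graph]]])
  next
    case 3
    then show ?thesis unfolding L3
      by (rule has_wheel4_line_graph_diamond[OF has_diamond_line_graph_paw[OF
            has_paw_line_graph_fork[OF has_fork_embed_graph]]])
  qed
qed

lemma has_wheel4_iter_line_graph_mono:
  assumes "m \<le> n" "has_wheel4 (iter_line_graph m G)"
  shows "has_wheel4 (iter_line_graph n G)"
  using assms(1)
  by (induction n rule: dec_induct)
    (simp_all add: assms(2) iter_line_graph_Suc has_wheel4_line_graph_wheel4)

theorem theorem4:
  fixes G :: "'a graph" and n :: nat
  assumes "simple_graph G"
    and "connected_graph G"
    and "\<not> is_path_graph G"
    and "\<not> is_cycle_graph G"
    and "\<not> is_claw G"
    and "n \<ge> 4"
  shows "\<not> representable (iter_line_graph n G)"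
proof -
  define k where "k = n - 2"
  have n: "n = Suc (Suc k)" and k: "3 \<le> Suc k" using assms(6) unfolding k_def by simp_all
  have "has_wheel4 (iter_line_graph (Suc k) G)"
    using k has_wheel4_iter_line_graph_3[OF star4_or_paw_or_fork[OF assms(1-5)]]
    by (rule has_wheel4_iter_line_graph_mono)
  moreover have "\<forall>e\<in>snd (iter_line_graph (Suc k) G). finite e"
    unfolding iter_line_graph_Suc by (rule line_graph_finite_edges)
  ultimately show ?thesis
    unfolding n iter_line_graph_Suc[of "Suc k"] by (intro line_graph_wheel4_not_representable)
qed

end
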